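(* Let $(X,d)$ be an arbitrary metric space and let $p\in X$. Then the function $$\tau_p(x,y)=\log\Big(1+2\frac{d(x,y)}{\sqrt{d(x,p)d(y,p)}}\Big)$$ is a metric on $X\setminus\{p\}$. *)

theory Defs
  imports "HOL-Analysis.Analysis"
begin

end

theory Submission
  imports Defs
begin

text \<open>A function \<open>g \<ge> 1\<close> that is submultiplicative in the sense \<open>g x z \<le> g x y * g y z\<close>
  becomes a metric after taking logarithms. For \<open>g x y = 1 + 2 d(x,y) / (a b)\<close> with
  \<open>a = sqrt (d x p)\<close>, \<open>b = sqrt (d y p)\<close>, \<open>c = sqrt (d z p)\<close>, submultiplicativity amounts,
  after clearing denominators, to \<open>r b\<^sup>2 \<le> t a b + s b c + 2 s t\<close> where \<open>r, s, t\<close> are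
  \<open>d x z, d x y, d y z\<close>. This follows from \<open>r \<le> s + t\<close> together with
  \<open>b\<^sup>2 - a b \<le> s\<close> and \<open>b\<^sup>2 - b c \<le> t\<close>, which are the triangle inequalities through \<open>p\<close>.\<close>

lemma Metric_space_ln_of_submultiplicative:
  fixes g :: "'a \<Rightarrow> 'a \<Rightarrow> real"
  assumes ge_one: "\<And>x y. 1 \<le> g x y"
    and commute: "\<And>x y. g x y = g y x"
    and eq_one_iff: "\<And>x y. x \<in> S \<Longrightarrow> y \<in> S \<Longrightarrow> g x y = 1 \<longleftrightarrow> x = y"
    and submult: "\<And>x y z. x \<in> S \<Longrightarrow> y \<in> S \<Longrightarrow> z \<in> S \<Longrightarrow> g x z \<le> g x y * g y z"
  shows "Metric_space S (\<lambda>x y. ln (g x y))"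
proof
  fix x y
  show "0 \<le> ln (g x y)" using ge_one by simp
  show "ln (g x y) = ln (g y x)" using commute by simp
next
  fix x y assume "x \<in> S" "y \<in> S"
  moreover have "ln (g x y) = 0 \<longleftrightarrow> g x y = 1"
    using ge_one[of x y] by (subst ln_eq_zero_iff) auto
  ultimately show "ln (g x y) = 0 \<longleftrightarrow> x = y" using eq_one_iff by simp
next
  fix x y z assume "x \<in> S" "y \<in> S" "z \<in> S"
  have "0 < g x y * g y z"
    using ge_one[of x y] ge_one[of y z] by simp
  then have "ln (g x z) \<le> ln (g x y * g y z)"
    using submult[OF \<open>x \<in> S\<close> \<open>y \<in> S\<close> \<open>z \<in> S\<close>] ge_one[of x z] by simp
  also have "\<dots> = ln (g x y) + ln (g y z)"
    using ge_one[of x y] ge_one[of y z] by (simp add: ln_mult)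
  finally show "ln (g x z) \<le> ln (g x y) + ln (g y z)" .
qed

lemma square_minus_mult_le:
  fixes b c t :: real
  assumes "b > 0" "c > 0" "t \<ge> 0" "b\<^sup>2 \<le> t + c\<^sup>2"
  shows "b\<^sup>2 - b * c \<le> t"
proof (cases "b \<le> c")
  case True
  then have "b * b \<le> b * c" using \<open>b > 0\<close> by (intro mult_left_mono) auto
  then show ?thesis using \<open>t \<ge> 0\<close> by (simp add: power2_eq_square)
next
  case False
  then have "c * c \<le> b * c" using \<open>c > 0\<close> by (intro mult_right_mono) auto
  then show ?thesis using assms(4) by (simp add: power2_eq_square)
qed

lemma one_plus_two_div_submult:
  fixes a b c r s t :: real
  assumes "a > 0" "b > 0" "c > 0" "s \<ge> 0" "t \<ge> 0" "r \<le> s + t"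
    and "b\<^sup>2 \<le> s + a\<^sup>2" "b\<^sup>2 \<le> t + c\<^sup>2"
  shows "1 + 2 * r / (a * c) \<le> (1 + 2 * s / (a * b)) * (1 + 2 * t / (b * c))"
proof -
  have "b\<^sup>2 - b * a \<le> s" "b\<^sup>2 - b * c \<le> t"
    using assms by (auto intro: square_minus_mult_le)
  then have "t * (b\<^sup>2 - b * a) \<le> t * s" "s * (b\<^sup>2 - b * c) \<le> s * t"
    using assms(4,5) by (auto intro: mult_left_mono)
  then have "s * (b\<^sup>2 - b * c) + t * (b\<^sup>2 - b * a) \<le> 2 * s * t"
    using mult.commute[of s t] by linarith
  moreover have "r * b\<^sup>2 \<le> (s + t) * b\<^sup>2"
    using assms(6) by (intro mult_right_mono) auto
  ultimately have "0 \<le> 2 * (t * a * b + s * b * c + 2 * s * t - r * b\<^sup>2) / (a * b\<^sup>2 * c)"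
    using assms(1-3) by (intro divide_nonneg_pos) (auto simp: algebra_simps)
  moreover have "(1 + 2 * s / (a * b)) * (1 + 2 * t / (b * c)) - (1 + 2 * r / (a * c))
      = 2 * (t * a * b + s * b * c + 2 * s * t - r * b\<^sup>2) / (a * b\<^sup>2 * c)"
    using assms(1-3) by (simp add: field_simps power2_eq_square)
  ultimately show ?thesis by linarith
qed

context Metric_space
begin

lemma one_plus_two_div_sqrt_submult:
  assumes "p \<in> M" "x \<in> M - {p}" "y \<in> M - {p}" "z \<in> M - {p}"
  shows "1 + 2 * d x z / sqrt (d x p * d z p)
    \<le> (1 + 2 * d x y / sqrt (d x p * d y p)) * (1 + 2 * d y z / sqrt (d y p * d z p))"
proof -
  have "1 + 2 * d x z / (sqrt (d x p) * sqrt (d z p))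
    \<le> (1 + 2 * d x y / (sqrt (d x p) * sqrt (d y p))) * (1 + 2 * d y z / (sqrt (d y p) * sqrt (d z p)))"
  proof (rule one_plus_two_div_submult)
    show "sqrt (d x p) > 0" "sqrt (d y p) > 0" "sqrt (d z p) > 0"
      using assms mdist_pos_less by auto
    show "d x z \<le> d x y + d y z"
      using assms triangle by auto
    show "(sqrt (d y p))\<^sup>2 \<le> d x y + (sqrt (d x p))\<^sup>2"
      using assms triangle[of y x p] commute[of y x] by auto
    show "(sqrt (d y p))\<^sup>2 \<le> d y z + (sqrt (d z p))\<^sup>2"
      using assms triangle[of y z p] by auto
  qed simp_all
  then show ?thesis by (simp add: real_sqrt_mult)
qed

end

theorem theorem2p1:
  fixes X :: "'a set" and d :: "'a \<Rightarrow> 'a \<Rightarrow> real" and p :: 'a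
  assumes "Metric_space X d" and "p \<in> X"
  shows "Metric_space (X - {p}) (\<lambda>x y. ln (1 + 2 * d x y / sqrt (d x p * d y p)))"
proof (rule Metric_space_ln_of_submultiplicative)
  interpret Metric_space X d by fact
  fix x y z
  show "1 \<le> 1 + 2 * d x y / sqrt (d x p * d y p)" by simp
  show "1 + 2 * d x y / sqrt (d x p * d y p) = 1 + 2 * d y x / sqrt (d y p * d x p)"
    by (simp add: commute[of x y] mult.commute)
  assume "x \<in> X - {p}" "y \<in> X - {p}"
  with \<open>p \<in> X\<close> show "1 + 2 * d x y / sqrt (d x p * d y p) = 1 \<longleftrightarrow> x = y"
    by simp
  assume "z \<in> X - {p}"
  with \<open>p \<in> X\<close> \<open>x \<in> X - {p}\<close> \<open>y \<in> X - {p}\<close>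
  show "1 + 2 * d x z / sqrt (d x p * d z p)
    \<le> (1 + 2 * d x y / sqrt (d x p * d y p)) * (1 + 2 * d y z / sqrt (d y p * d z p))"
    by (rule one_plus_two_div_sqrt_submult)
qed

end
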